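(* Let $R$ be a commutative ring with $1$ and $M$ a finitely generated flat $R$-module. Then the annihilator $\operatorname{Ann}_R(M)$ is a pure ideal of $R$.
   Context: An ideal $I$ of a commutative ring $R$ is called pure if the canonical ring map $R\to R/I$ is flat, i.e. $R/I$ is a flat $R$-module. *)

theory Defs
  imports Complex_Main
begin

text \<open>
  We treat modules of the form N = 'm / K for an R-submodule K of 'm; in particular
  M = 'm / {0} and R / I = 'a / I (with scale = (*)).

  Tensor products J \<otimes>_R N (J an ideal of R) are built concretely: formal finite
  Z-linear combinations of pairs (j, m) with j in J (functions 'a \<times> 'm \<Rightarrow> int with finite
  support in J \<times> UNIV), modulo the subgroup generated by the bilinearity / balancing
  relations and by the pairs (j, k) with k in K (which are zero in N = 'm / K).
\<close>

definition delta :: "'x \<Rightarrow> 'x \<Rightarrow> int" where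
  "delta p = (\<lambda>q. if q = p then 1 else 0)"

definition ideal :: "'a::comm_ring_1 set \<Rightarrow> bool" where
  "ideal J \<longleftrightarrow> module.subspace ((*) :: 'a \<Rightarrow> 'a \<Rightarrow> 'a) J"

definition tensor_gens ::
  "'a::comm_ring_1 set \<Rightarrow> ('a \<Rightarrow> 'm::ab_group_add \<Rightarrow> 'm) \<Rightarrow> 'm set \<Rightarrow> ('a \<times> 'm \<Rightarrow> int) set" where
  "tensor_gens J scale K =
     {(\<lambda>q. delta (j + j', m) q - delta (j, m) q - delta (j', m) q) | j j' m. j \<in> J \<and> j' \<in> J}
   \<union> {(\<lambda>q. delta (j, m + m') q - delta (j, m) q - delta (j, m') q) | j m m'. j \<in> J}
   \<union> {(\<lambda>q. delta (r * j, m) q - delta (j, scale r m) q) | r j m. j \<in> J}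
   \<union> {delta (j, k) | j k. j \<in> J \<and> k \<in> K}"

inductive_set tensor_rel ::
  "'a::comm_ring_1 set \<Rightarrow> ('a \<Rightarrow> 'm::ab_group_add \<Rightarrow> 'm) \<Rightarrow> 'm set \<Rightarrow> ('a \<times> 'm \<Rightarrow> int) set"
  for J scale K where
  gen: "g \<in> tensor_gens J scale K \<Longrightarrow> g \<in> tensor_rel J scale K"
| zero: "(\<lambda>_. 0) \<in> tensor_rel J scale K"
| diff: "x \<in> tensor_rel J scale K \<Longrightarrow> y \<in> tensor_rel J scale K \<Longrightarrow> (\<lambda>q. x q - y q) \<in> tensor_rel J scale K"

text \<open>Image in 'm (representative in N = 'm / K) of a formal sum under j \<otimes> m \<mapsto> j m.\<close>
definition tensor_eval ::
  "('a::comm_ring_1 \<Rightarrow> 'm::ab_group_add \<Rightarrow> 'm) \<Rightarrow> ('a \<times> 'm \<Rightarrow> int) \<Rightarrow> 'm" where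
  "tensor_eval scale f = (\<Sum>p\<in>{p. f p \<noteq> 0}. scale (of_int (f p) * fst p) (snd p))"

text \<open>The R-module 'm / K is flat: for every ideal J of R the canonical map
  J \<otimes>_R ('m / K) \<rightarrow> 'm / K is injective.\<close>
definition flat_quot :: "('a::comm_ring_1 \<Rightarrow> 'm::ab_group_add \<Rightarrow> 'm) \<Rightarrow> 'm set \<Rightarrow> bool" where
  "flat_quot scale K \<longleftrightarrow>
     (\<forall>J. ideal J \<longrightarrow>
        (\<forall>f :: 'a \<times> 'm \<Rightarrow> int. finite {p. f p \<noteq> 0} \<and> {p. f p \<noteq> 0} \<subseteq> J \<times> UNIV
           \<and> tensor_eval scale f \<in> K \<longrightarrow> f \<in> tensor_rel J scale K))"

definition flat_module :: "('a::comm_ring_1 \<Rightarrow> 'm::ab_group_add \<Rightarrow> 'm) \<Rightarrow> bool" where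
  "flat_module scale \<longleftrightarrow> module scale \<and> flat_quot scale {0}"

definition finitely_generated :: "('a::comm_ring_1 \<Rightarrow> 'm::ab_group_add \<Rightarrow> 'm) \<Rightarrow> bool" where
  "finitely_generated scale \<longleftrightarrow> (\<exists>S. finite S \<and> module.span scale S = UNIV)"

definition annihilator :: "('a::comm_ring_1 \<Rightarrow> 'm::ab_group_add \<Rightarrow> 'm) \<Rightarrow> 'a set" where
  "annihilator scale = {r. \<forall>m. scale r m = 0}"

definition pure_ideal :: "'a::comm_ring_1 set \<Rightarrow> bool" where
  "pure_ideal I \<longleftrightarrow> ideal I \<and> flat_quot ((*) :: 'a \<Rightarrow> 'a \<Rightarrow> 'a) I"

end

theory Submission
  imports Defs
begin

text \<open>
  Let \<open>x \<in> Ann(M)\<close> and \<open>J = xR\<close>. The tensor \<open>x \<otimes> m \<in> J \<otimes> M\<close> maps to \<open>x m = 0\<close>, so it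
  vanishes by flatness. Since \<open>J \<cong> R / Ann(x)\<close>, there is a well-defined map
  \<open>J \<otimes> M \<rightarrow> M / Ann(x) M\<close>, \<open>j \<otimes> m \<mapsto> (j / x) m\<close>; it sends \<open>x \<otimes> m\<close> to the class of \<open>m\<close>,
  hence \<open>M = Ann(x) M\<close>. As \<open>M\<close> is finitely generated, Nakayama's lemma yields
  \<open>a \<in> Ann(x)\<close> with \<open>(1 - a) M = 0\<close>, i.e. \<open>y = 1 - a \<in> Ann(M)\<close> and \<open>x y = x\<close>.
  An ideal \<open>I\<close> with this property is pure: in \<open>J \<otimes> R / I\<close> every tensor equals \<open>z \<otimes> 1\<close>,
  where \<open>z \<in> J\<close> is its image in \<open>R\<close>; if \<open>z \<in> I\<close>, pick \<open>y \<in> I\<close> with \<open>z y = z\<close>, then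
  \<open>z \<otimes> 1 = z y \<otimes> 1 = z \<otimes> y = 0\<close>.
\<close>

lemma module_mult: "module ((*) :: 'a::comm_ring_1 \<Rightarrow> 'a \<Rightarrow> 'a)"
  by unfold_locales (simp_all add: algebra_simps)

lemma ideal_iff: "ideal (J :: 'a::comm_ring_1 set) \<longleftrightarrow>
    0 \<in> J \<and> (\<forall>x\<in>J. \<forall>y\<in>J. x + y \<in> J) \<and> (\<forall>c. \<forall>x\<in>J. c * x \<in> J)"
  unfolding ideal_def module.subspace_def[OF module_mult] ..

lemma
  assumes "ideal J"
  shows ideal_zero: "0 \<in> J"
    and ideal_add: "x \<in> J \<Longrightarrow> y \<in> J \<Longrightarrow> x + y \<in> J"
    and ideal_mult_left: "x \<in> J \<Longrightarrow> c * x \<in> J"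
  using assms unfolding ideal_iff by auto

lemma ideal_diff: "ideal J \<Longrightarrow> x \<in> J \<Longrightarrow> y \<in> J \<Longrightarrow> x - y \<in> J"
  using ideal_add[of J x "(- 1) * y"] ideal_mult_left[of J y "- 1"] by simp

lemma ideal_sum: "ideal J \<Longrightarrow> (\<And>x. x \<in> B \<Longrightarrow> f x \<in> J) \<Longrightarrow> sum f B \<in> J"
  unfolding ideal_def by (rule module.subspace_sum[OF module_mult])

definition tensor_equiv ::
  "'a::comm_ring_1 set \<Rightarrow> ('a \<Rightarrow> 'm::ab_group_add \<Rightarrow> 'm) \<Rightarrow> 'm set \<Rightarrow>
    ('a \<times> 'm \<Rightarrow> int) \<Rightarrow> ('a \<times> 'm \<Rightarrow> int) \<Rightarrow> bool" where
  "tensor_equiv J scale K f g \<longleftrightarrow> (\<lambda>q. f q - g q) \<in> tensor_rel J scale K"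

lemma tensor_rel_iff_equiv_zero: "f \<in> tensor_rel J scale K \<longleftrightarrow> tensor_equiv J scale K f (\<lambda>_. 0)"
  unfolding tensor_equiv_def by simp

lemma tensor_equiv_refl: "tensor_equiv J scale K f f"
  unfolding tensor_equiv_def by (simp add: tensor_rel.zero)

lemma tensor_equiv_diff:
  assumes "tensor_equiv J scale K f f'" and "tensor_equiv J scale K g g'"
  shows "tensor_equiv J scale K (\<lambda>q. f q - g q) (\<lambda>q. f' q - g' q)"
proof -
  have "(\<lambda>q. (f q - f' q) - (g q - g' q)) \<in> tensor_rel J scale K"
    using assms unfolding tensor_equiv_def by (rule tensor_rel.diff)
  then show ?thesis unfolding tensor_equiv_def by (simp add: algebra_simps)
qed

lemma tensor_equiv_cong:
  "tensor_equiv J scale K f g \<Longrightarrow> (\<And>q. f q - g q = f' q - g' q) \<Longrightarrow> tensor_equiv J scale K f' g'"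
  unfolding tensor_equiv_def by simp

lemma tensor_equiv_sym: "tensor_equiv J scale K f g \<Longrightarrow> tensor_equiv J scale K g f"
  by (erule tensor_equiv_cong[OF tensor_equiv_diff[OF tensor_equiv_refl]]) simp

lemma tensor_equiv_add:
  assumes "tensor_equiv J scale K f f'" and "tensor_equiv J scale K g g'"
  shows "tensor_equiv J scale K (\<lambda>q. f q + g q) (\<lambda>q. f' q + g' q)"
  by (rule tensor_equiv_cong[OF tensor_equiv_diff[OF assms(1) tensor_equiv_diff[OF tensor_equiv_refl assms(2)]]])
    simp

lemma tensor_equiv_trans [trans]:
  assumes "tensor_equiv J scale K f g" and "tensor_equiv J scale K g h"
  shows "tensor_equiv J scale K f h"
  by (rule tensor_equiv_cong[OF tensor_equiv_add[OF assms]]) simp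

lemma tensor_equiv_add_left:
  assumes "j \<in> J" and "j' \<in> J"
  shows "tensor_equiv J scale K (delta (j + j', m)) (\<lambda>q. delta (j, m) q + delta (j', m) q)"
proof -
  have "(\<lambda>q. delta (j + j', m) q - delta (j, m) q - delta (j', m) q) \<in> tensor_rel J scale K"
    using assms by (intro tensor_rel.gen) (unfold tensor_gens_def, blast)
  then show ?thesis unfolding tensor_equiv_def by (simp add: diff_diff_eq)
qed

lemma tensor_equiv_balance:
  "j \<in> J \<Longrightarrow> tensor_equiv J scale K (delta (r * j, m)) (delta (j, scale r m))"
  unfolding tensor_equiv_def by (rule tensor_rel.gen) (unfold tensor_gens_def, blast)

lemma tensor_equiv_zero_right:
  "j \<in> J \<Longrightarrow> k \<in> K \<Longrightarrow> tensor_equiv J scale K (delta (j, k)) (\<lambda>_. 0)"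
  unfolding tensor_equiv_def by (rule tensor_rel.gen) (unfold tensor_gens_def, auto)

lemma tensor_equiv_delta_zero:
  assumes "ideal J"
  shows "tensor_equiv J scale K (delta (0, m)) (\<lambda>_. 0)"
proof -
  have "tensor_equiv J scale K (delta (0 + 0, m)) (\<lambda>q. delta (0, m) q + delta (0, m) q)"
    using ideal_zero[OF assms] ideal_zero[OF assms] by (rule tensor_equiv_add_left)
  then show ?thesis by (rule tensor_equiv_cong[OF tensor_equiv_sym]) simp
qed

lemma tensor_equiv_of_int:
  assumes J: "ideal J" and z: "z \<in> J"
  shows "tensor_equiv J scale K (\<lambda>q. n * delta (z, m) q) (delta (of_int n * z, m))"
proof (induction n rule: int_induct[where k = 0])
  case base
  show ?case using tensor_equiv_sym[OF tensor_equiv_delta_zero[OF J]] by simp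
next
  case (step1 i)
  have "tensor_equiv J scale K (\<lambda>q. i * delta (z, m) q + delta (z, m) q)
      (\<lambda>q. delta (of_int i * z, m) q + delta (z, m) q)"
    by (rule tensor_equiv_add[OF step1.IH tensor_equiv_refl])
  also have "tensor_equiv J scale K \<dots> (delta (of_int i * z + z, m))"
    by (rule tensor_equiv_sym[OF tensor_equiv_add_left[OF ideal_mult_left[OF J z] z]])
  finally show ?case by (simp add: distrib_right)
next
  case (step2 i)
  have "tensor_equiv J scale K (\<lambda>q. i * delta (z, m) q - delta (z, m) q)
      (\<lambda>q. delta (of_int i * z, m) q - delta (z, m) q)"
    by (rule tensor_equiv_diff[OF step2.IH tensor_equiv_refl])
  also have "of_int i * z = of_int (i - 1) * z + z"
    by (simp add: algebra_simps)
  also have "tensor_equiv J scale K (\<lambda>q. delta (of_int (i - 1) * z + z, m) q - delta (z, m) q)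
      (\<lambda>q. (delta (of_int (i - 1) * z, m) q + delta (z, m) q) - delta (z, m) q)"
    by (rule tensor_equiv_diff[OF tensor_equiv_add_left[OF ideal_mult_left[OF J z] z] tensor_equiv_refl])
  finally show ?case by (simp add: left_diff_distrib)
qed

lemma tensor_eval_mult_mem_ideal:
  assumes "ideal J" and "{p. f p \<noteq> 0} \<subseteq> J \<times> UNIV"
  shows "tensor_eval (*) f \<in> J"
  unfolding tensor_eval_def
proof (rule ideal_sum[OF assms(1)])
  fix p assume "p \<in> {p. f p \<noteq> 0}"
  then have "fst p \<in> J" using assms(2) by auto
  then have "(snd p * of_int (f p)) * fst p \<in> J" by (rule ideal_mult_left[OF assms(1)])
  then show "(of_int (f p) * fst p) * snd p \<in> J" by (simp add: ac_simps)
qed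

lemma tensor_eval_mult_remove:
  assumes "finite {q. f q \<noteq> 0}" and "f p \<noteq> 0"
  shows "tensor_eval (*) f = tensor_eval (*) (f(p := 0)) + (of_int (f p) * fst p) * snd p"
proof -
  have supp: "{q. f q \<noteq> 0} = insert p {q. (f(p := 0)) q \<noteq> 0}" using assms(2) by auto
  have "(\<Sum>q | (f(p := 0)) q \<noteq> 0. (of_int ((f(p := 0)) q) * fst q) * snd q)
      = (\<Sum>q | (f(p := 0)) q \<noteq> 0. (of_int (f q) * fst q) * snd q)"
    by (intro sum.cong) auto
  then show ?thesis
    using assms(1) unfolding tensor_eval_def supp by (simp add: add.commute)
qed

lemma tensor_equiv_delta_eval:
  fixes J K :: "'a::comm_ring_1 set"
  assumes J: "ideal J" and "finite {p. f p \<noteq> 0}" and "{p. f p \<noteq> 0} \<subseteq> J \<times> UNIV"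
  shows "tensor_equiv J (*) K f (delta (tensor_eval (*) f, 1))"
  using assms(2-3)
proof (induction "{p. f p \<noteq> 0}" arbitrary: f rule: finite_induct)
  case empty
  then have "f = (\<lambda>_. 0)" by auto
  then show ?case
    using tensor_equiv_sym[OF tensor_equiv_delta_zero[OF J]] by (simp add: tensor_eval_def)
next
  case (insert p S)
  obtain j m where p: "p = (j, m)" by fastforce
  define f' where "f' = f(p := 0)"
  have supp': "{q. f' q \<noteq> 0} = S" and "f p \<noteq> 0"
    using insert.hyps(2,4) unfolding f'_def by auto
  have J': "{q. f' q \<noteq> 0} \<subseteq> J \<times> UNIV" and j: "j \<in> J"
    using insert.prems insert.hyps(4) p by (auto simp: supp')
  define e where "e = tensor_eval (*) f'"
  define w where "w = m * (of_int (f p) * j)"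
  have e: "e \<in> J" unfolding e_def using J J' by (rule tensor_eval_mult_mem_ideal)
  have w: "w \<in> J" unfolding w_def using J j by (intro ideal_mult_left)
  have fin: "finite {q. f q \<noteq> 0}" using insert.hyps(1,4) by (metis finite_insert)
  have eval: "tensor_eval (*) f = e + w"
    using tensor_eval_mult_remove[OF fin \<open>f p \<noteq> 0\<close>] unfolding e_def w_def f'_def p
    by (simp add: ac_simps)
  have f_split: "f = (\<lambda>q. f' q + f p * delta (j, m) q)"
    by (auto simp: fun_eq_iff f'_def delta_def p)
  have "tensor_equiv J (*) K f (\<lambda>q. delta (e, 1) q + delta (of_int (f p) * j, m) q)"
    unfolding e_def
    by (subst f_split, rule tensor_equiv_add[OF insert.hyps(3)[OF supp'[symmetric] J']
          tensor_equiv_of_int[OF J j]])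
  also have "tensor_equiv J (*) K \<dots> (\<lambda>q. delta (e, 1) q + delta (w, 1) q)"
    using tensor_equiv_sym[OF tensor_equiv_balance[where scale = "(*)" and K = K and r = m and m = 1,
        OF ideal_mult_left[OF J j]]]
    unfolding w_def by (intro tensor_equiv_add[OF tensor_equiv_refl]) simp
  also have "tensor_equiv J (*) K \<dots> (delta (tensor_eval (*) f, 1))"
    unfolding eval by (rule tensor_equiv_sym[OF tensor_equiv_add_left[OF e w]])
  finally show ?case .
qed

lemma pure_idealI:
  fixes I :: "'a::comm_ring_1 set"
  assumes I: "ideal I" and idem: "\<And>z. z \<in> I \<Longrightarrow> \<exists>y\<in>I. z * y = z"
  shows "pure_ideal I"
  unfolding pure_ideal_def flat_quot_def
proof (intro conjI I allI impI)
  fix J and f :: "'a \<times> 'a \<Rightarrow> int"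
  assume J: "ideal J"
    and f: "finite {p. f p \<noteq> 0} \<and> {p. f p \<noteq> 0} \<subseteq> J \<times> UNIV \<and> tensor_eval (*) f \<in> I"
  define z where "z = tensor_eval (*) f"
  have zJ: "z \<in> J" unfolding z_def using J f by (intro tensor_eval_mult_mem_ideal) auto
  obtain y where y: "y \<in> I" "z * y = z" using idem f unfolding z_def by blast
  have "tensor_equiv J (*) I f (delta (z, 1))"
    unfolding z_def using J f by (intro tensor_equiv_delta_eval) auto
  also have "delta (z, 1) = delta (y * z, 1)"
    using y(2) by (simp add: mult.commute)
  also have "tensor_equiv J (*) I \<dots> (delta (z, y * 1))"
    using zJ by (rule tensor_equiv_balance)
  also have "tensor_equiv J (*) I \<dots> (\<lambda>_. 0)"
    using zJ y(1) by (intro tensor_equiv_zero_right) simp_all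
  finally show "f \<in> tensor_rel J (*) I"
    by (simp add: tensor_rel_iff_equiv_zero)
qed

context module
begin

lemma scale_mem_subspace_span:
  assumes V: "subspace V" and B: "\<And>b. b \<in> B \<Longrightarrow> c *s b \<in> V" and y: "y \<in> span B"
  shows "c *s y \<in> V"
proof -
  have "subspace {x. c *s x \<in> V}"
    by (rule module_hom.subspace_linear_preimage[OF module_hom_scale_self V])
  then have "span B \<subseteq> {x. c *s x \<in> V}"
    using B by (intro span_minimal) auto
  then show ?thesis using y by blast
qed

lemma span_ideal_multiples:
  assumes "ideal A"
  shows "span ((\<lambda>a. a *s t) ` A) = (\<lambda>a. a *s t) ` A"
proof -
  interpret mult_hom: module_hom "(*)" scale "\<lambda>a. a *s t"
    by (rule module_hom_scale_left)
  have span_A: "module.span (*) A = A"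
    using assms unfolding ideal_def by (rule module.span_eq_iff[OF module_mult, THEN iffD2])
  show ?thesis using mult_hom.span_image[of A] unfolding span_A .
qed

lemma span_Un_ideal_multiples:
  assumes "ideal A" and "x \<in> span (X \<union> (\<lambda>a. a *s t) ` A)"
  shows "\<exists>a\<in>A. x - a *s t \<in> span X"
proof -
  obtain u a where "x = u + a *s t" "u \<in> span X" "a \<in> A"
    using assms(2) unfolding span_Un span_ideal_multiples[OF assms(1)] by blast
  then show ?thesis by (intro bexI[of _ a]) simp_all
qed

lemma ideal_scale_mem_span_insert:
  assumes "ideal A" "subspace W" "b \<in> A" "y \<in> span (insert t W)"
  shows "b *s y \<in> span (W \<union> (\<lambda>a. a *s t) ` A)"
proof -
  obtain k where k: "y - k *s t \<in> W"
    using assms(2,4) unfolding span_breakdown_eq span_eq_iff[THEN iffD2, OF assms(2)] by blast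
  have "b *s (y - k *s t) \<in> span (W \<union> (\<lambda>a. a *s t) ` A)"
    using subspace_scale[OF assms(2) k] by (intro span_base) blast
  moreover have "(b * k) *s t \<in> span (W \<union> (\<lambda>a. a *s t) ` A)"
    using ideal_mult_left[OF assms(1,3), of k] by (intro span_base) (auto simp: mult.commute)
  ultimately have "b *s (y - k *s t) + (b * k) *s t \<in> span (W \<union> (\<lambda>a. a *s t) ` A)"
    by (rule span_add)
  then show ?thesis by (simp add: scale_right_diff_distrib)
qed

lemma scale_mem_span_ideal_multiples_insert:
  assumes A: "ideal A" and W: "subspace W" and T: "\<forall>s\<in>T. c *s s \<in> span (insert t W)"
    and y: "y \<in> span (W \<union> {b *s s | b s. b \<in> A \<and> s \<in> T})"
  shows "c *s y \<in> span (W \<union> (\<lambda>b. b *s t) ` A)"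
proof (rule scale_mem_subspace_span[OF subspace_span _ y])
  fix g assume "g \<in> W \<union> {b *s s | b s. b \<in> A \<and> s \<in> T}"
  then show "c *s g \<in> span (W \<union> (\<lambda>b. b *s t) ` A)"
  proof
    assume "g \<in> W"
    then show ?thesis using subspace_scale[OF W] by (blast intro: span_base)
  next
    assume "g \<in> {b *s s | b s. b \<in> A \<and> s \<in> T}"
    then obtain b s where "g = b *s s" "b \<in> A" "s \<in> T" by blast
    moreover have "b *s (c *s s) \<in> span (W \<union> (\<lambda>b. b *s t) ` A)"
      using T \<open>s \<in> T\<close> by (intro ideal_scale_mem_span_insert[OF A W \<open>b \<in> A\<close>]) simp
    ultimately show ?thesis by (simp add: mult.commute)
  qed
qed

lemma scale_insert_mem_subspace:
  assumes W: "subspace W" and T: "\<forall>t\<in>T. c *s t \<in> span (insert t0 W)" and t0: "d *s t0 \<in> W"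
  shows "\<forall>t\<in>insert t0 T. (d * c) *s t \<in> W"
proof
  fix t assume "t \<in> insert t0 T"
  then show "(d * c) *s t \<in> W"
  proof
    assume "t = t0"
    then show ?thesis using subspace_scale[OF W t0, of c] by (simp add: mult.commute)
  next
    assume "t \<in> T"
    have span_W: "span W = W" using W by simp
    obtain k where k: "c *s t - k *s t0 \<in> W"
      using T \<open>t \<in> T\<close> unfolding span_breakdown_eq span_W by blast
    have "(d * c) *s t = d *s (c *s t - k *s t0) + k *s (d *s t0)"
      by (simp add: algebra_simps)
    also have "\<dots> \<in> W"
      by (rule subspace_add[OF W subspace_scale[OF W k] subspace_scale[OF W t0]])
    finally show ?thesis .
  qed
qed

lemma nakayama_relative:
  assumes "finite T" and A: "ideal A" and "subspace W"
    and "T \<subseteq> span (W \<union> {a *s s | a s. a \<in> A \<and> s \<in> T})"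
  shows "\<exists>a\<in>A. \<forall>t\<in>T. (1 - a) *s t \<in> W"
  using assms(1,3,4)
proof (induction T arbitrary: W rule: finite_induct)
  case empty
  then show ?case using ideal_zero[OF A] by blast
next
  case (insert t0 T)
  define AT where "AT = {a *s s | a s. a \<in> A \<and> s \<in> T}"
  define W' where "W' = span (insert t0 W)"
  have W: "span W = W" using insert.prems(1) by simp
  have split: "\<exists>a\<in>A. t - a *s t0 \<in> span (W \<union> AT)" if "t \<in> insert t0 T" for t
  proof (rule span_Un_ideal_multiples[OF A])
    have "W \<union> {a *s s | a s. a \<in> A \<and> s \<in> insert t0 T} = W \<union> AT \<union> (\<lambda>a. a *s t0) ` A"
      unfolding AT_def by blast
    then show "t \<in> span (W \<union> AT \<union> (\<lambda>a. a *s t0) ` A)" using insert.prems(2) that by auto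
  qed
  have "T \<subseteq> span (W' \<union> AT)"
  proof
    fix t assume "t \<in> T"
    then obtain a where "t - a *s t0 \<in> span (W \<union> AT)" using split by blast
    moreover have "span (W \<union> AT) \<subseteq> span (W' \<union> AT)"
      unfolding W'_def by (intro span_mono) (auto intro: span_base)
    moreover have "a *s t0 \<in> span (W' \<union> AT)"
      unfolding W'_def by (intro span_base UnI1 span_scale) (simp add: span_base)
    ultimately have "(t - a *s t0) + a *s t0 \<in> span (W' \<union> AT)" by (blast intro: span_add)
    then show "t \<in> span (W' \<union> AT)" by simp
  qed
  with insert.IH[of W'] obtain a where a: "a \<in> A" "\<forall>t\<in>T. (1 - a) *s t \<in> span (insert t0 W)"
    unfolding W'_def AT_def by auto
  obtain a0 where a0: "a0 \<in> A" "t0 - a0 *s t0 \<in> span (W \<union> AT)" using split by blast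
  obtain b where b: "b \<in> A" "(1 - a) *s (t0 - a0 *s t0) - b *s t0 \<in> W"
    using span_Un_ideal_multiples[OF A
        scale_mem_span_ideal_multiples_insert[OF A insert.prems(1) a(2) a0(2)[unfolded AT_def]]] W
    by blast
  define a2 where "a2 = a + a0 - a * a0 + b"
  have "a2 \<in> A"
    unfolding a2_def using a(1) a0(1) b(1)
    by (intro ideal_add[OF A] ideal_diff[OF A] ideal_mult_left[OF A])
  have a2_t0: "(1 - a2) *s t0 \<in> W"
  proof -
    have "(1 - a2) *s t0 = (1 - a) *s (t0 - a0 *s t0) - b *s t0"
      unfolding a2_def by (simp add: algebra_simps)
    then show ?thesis using b(2) by simp
  qed
  have "a + a2 - a * a2 \<in> A"
    using a(1) \<open>a2 \<in> A\<close> by (intro ideal_diff[OF A] ideal_add[OF A] ideal_mult_left[OF A])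
  moreover have "(1 - a2) * (1 - a) = 1 - (a + a2 - a * a2)"
    by (simp add: algebra_simps)
  then have "\<forall>t\<in>insert t0 T. (1 - (a + a2 - a * a2)) *s t \<in> W"
    using scale_insert_mem_subspace[OF insert.prems(1) a(2) a2_t0] by simp
  ultimately show ?case by blast
qed

lemma nakayama:
  assumes "finite T" and "span T = UNIV" and A: "ideal A"
    and AM: "span {a *s m | a m. a \<in> A} = UNIV"
  shows "\<exists>a\<in>A. \<forall>m. (1 - a) *s m = 0"
proof -
  define AT where "AT = {a *s s | a s. a \<in> A \<and> s \<in> T}"
  have "a *s m \<in> span AT" if "a \<in> A" for a m
  proof (rule scale_mem_subspace_span[OF subspace_span])
    show "a *s s \<in> span AT" if "s \<in> T" for s
      using \<open>a \<in> A\<close> that unfolding AT_def by (intro span_base) blast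
    show "m \<in> span T" using assms(2) by simp
  qed
  then have "span {a *s m | a m. a \<in> A} \<subseteq> span AT"
    by (intro span_minimal) auto
  then have "T \<subseteq> span ({0} \<union> AT)"
    using AM span_mono[of AT "{0} \<union> AT"] by auto
  then obtain a where a: "a \<in> A" "\<forall>t\<in>T. (1 - a) *s t = 0"
    using nakayama_relative[OF assms(1) A subspace_single_0] unfolding AT_def by auto
  have "(1 - a) *s m = 0" for m
    using scale_mem_subspace_span[OF subspace_single_0, of T "1 - a" m] a assms(2) by auto
  with a show ?thesis by blast
qed

end

lemma support_delta [simp]: "{q. delta p q \<noteq> 0} = {p}"
  by (auto simp: delta_def)

lemma finite_support_diff:
  "finite {q. f q \<noteq> 0} \<Longrightarrow> finite {q. g q \<noteq> 0} \<Longrightarrow> finite {q. f q - g q \<noteq> (0 :: int)}"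
  by (rule finite_subset[of _ "{q. f q \<noteq> 0} \<union> {q. g q \<noteq> 0}"]) auto

lemma tensor_rel_finite_support: "g \<in> tensor_rel J scale K \<Longrightarrow> finite {q. g q \<noteq> 0}"
proof (induction rule: tensor_rel.induct)
  case (gen g)
  then show ?case
    unfolding tensor_gens_def
    by (elim UnE CollectE exE conjE; hypsubst; (intro finite_support_diff)?; simp)
next
  case (diff f g)
  show ?case using diff.IH by (rule finite_support_diff)
qed simp

text \<open>
  If \<open>x * c j = j\<close> for \<open>j \<in> J = xR\<close>, then \<open>c j\<close> is determined modulo \<open>Ann(x)\<close>, so
  \<open>j \<otimes> m \<mapsto> c j \<cdot> m\<close> is a well-defined map \<open>J \<otimes> M \<rightarrow> M / Ann(x) M\<close>.
  \<open>tensor_eval_with scale c\<close> computes representatives in \<open>M\<close> of its values.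
\<close>
definition tensor_eval_with ::
  "('a::comm_ring_1 \<Rightarrow> 'm::ab_group_add \<Rightarrow> 'm) \<Rightarrow> ('a \<Rightarrow> 'a) \<Rightarrow> ('a \<times> 'm \<Rightarrow> int) \<Rightarrow> 'm" where
  "tensor_eval_with scale c f = (\<Sum>p | f p \<noteq> 0. scale (of_int (f p) * c (fst p)) (snd p))"

context module
begin

lemma tensor_eval_with_superset:
  assumes "finite S" and "{p. f p \<noteq> 0} \<subseteq> S"
  shows "tensor_eval_with scale c f = (\<Sum>p\<in>S. (of_int (f p) * c (fst p)) *s snd p)"
  unfolding tensor_eval_with_def using assms by (intro sum.mono_neutral_left) auto

lemma tensor_eval_with_diff:
  assumes f: "finite {p. f p \<noteq> 0}" and g: "finite {p. g p \<noteq> 0}"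
  shows "tensor_eval_with scale c (\<lambda>p. f p - g p) = tensor_eval_with scale c f - tensor_eval_with scale c g"
proof -
  let ?S = "{p. f p \<noteq> 0} \<union> {p. g p \<noteq> 0}"
  have S: "finite ?S" using f g by simp
  have "tensor_eval_with scale c (\<lambda>p. f p - g p) = (\<Sum>p\<in>?S. (of_int (f p - g p) * c (fst p)) *s snd p)"
    using S by (rule tensor_eval_with_superset) auto
  moreover have "tensor_eval_with scale c f = (\<Sum>p\<in>?S. (of_int (f p) * c (fst p)) *s snd p)"
    using S by (rule tensor_eval_with_superset) auto
  moreover have "tensor_eval_with scale c g = (\<Sum>p\<in>?S. (of_int (g p) * c (fst p)) *s snd p)"
    using S by (rule tensor_eval_with_superset) auto
  ultimately show ?thesis
    by (simp add: sum_subtractf left_diff_distrib scale_left_diff_distrib)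
qed

lemma tensor_eval_with_delta [simp]: "tensor_eval_with scale c (delta p) = c (fst p) *s snd p"
  by (simp add: tensor_eval_with_def delta_def)

lemma tensor_eval_with_zero [simp]: "tensor_eval_with scale c (\<lambda>_. 0) = 0"
  by (simp add: tensor_eval_with_def)

lemma tensor_eval_with_mem_span:
  assumes J: "ideal J" and x_c: "\<And>j. j \<in> J \<Longrightarrow> x * c j = j" and "g \<in> tensor_rel J scale K"
  shows "tensor_eval_with scale c g \<in> span (K \<union> {a *s v | a v. x * a = 0})"
  using assms(3)
proof (induction rule: tensor_rel.induct)
  case (gen g)
  have ann: "d *s v \<in> span (K \<union> {a *s v | a v. x * a = 0})" if "x * d = 0" for d v
    using that by (intro span_base UnI2) blast
  note eval_simps = tensor_eval_with_diff finite_support_diff support_delta finite_insert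
    finite.emptyI tensor_eval_with_delta fst_conv snd_conv
  from gen consider
      (add_left) j j' m where "g = (\<lambda>q. delta (j + j', m) q - delta (j, m) q - delta (j', m) q)"
        "j \<in> J" "j' \<in> J"
    | (add_right) j m m' where "g = (\<lambda>q. delta (j, m + m') q - delta (j, m) q - delta (j, m') q)"
    | (balance) r j m where "g = (\<lambda>q. delta (r * j, m) q - delta (j, r *s m) q)" "j \<in> J"
    | (zero_right) j k where "g = delta (j, k)" "k \<in> K"
    unfolding tensor_gens_def by blast
  then show ?case
  proof cases
    case add_left
    have "tensor_eval_with scale c g = c (j + j') *s m - c j *s m - c j' *s m"
      unfolding add_left(1) by (simp only: eval_simps)
    also have "\<dots> = (c (j + j') - c j - c j') *s m"
      by (simp only: scale_left_diff_distrib)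
    finally have eval: "tensor_eval_with scale c g = (c (j + j') - c j - c j') *s m" .
    have "x * (c (j + j') - c j - c j') = 0"
      using x_c add_left(2,3) ideal_add[OF J] by (simp add: right_diff_distrib)
    then show ?thesis unfolding eval by (rule ann)
  next
    case add_right
    have "tensor_eval_with scale c g = c j *s (m + m') - c j *s m - c j *s m'"
      unfolding add_right by (simp only: eval_simps)
    then show ?thesis by (simp add: scale_right_distrib span_zero)
  next
    case balance
    have "tensor_eval_with scale c g = c (r * j) *s m - c j *s (r *s m)"
      unfolding balance(1) by (simp only: eval_simps)
    also have "\<dots> = (c (r * j) - c j * r) *s m"
      by (simp only: scale_left_diff_distrib scale_scale)
    finally have eval: "tensor_eval_with scale c g = (c (r * j) - c j * r) *s m" .
    have "x * (c (r * j) - c j * r) = 0"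
      using x_c[OF balance(2)] x_c[OF ideal_mult_left[OF J balance(2)]]
      by (simp add: right_diff_distrib mult.assoc[symmetric])
    then show ?thesis unfolding eval by (rule ann)
  next
    case zero_right
    then show ?thesis by (simp add: span_base span_scale)
  qed
next
  case zero
  then show ?case by (simp add: span_zero)
next
  case (diff f g)
  then show ?case
    by (simp add: tensor_eval_with_diff tensor_rel_finite_support span_diff)
qed

lemma flat_quot_mem_span_annihilator:
  assumes "flat_quot scale K" and "x *s m \<in> K"
  shows "m \<in> span (K \<union> {a *s v | a v. x * a = 0})"
proof -
  define J where "J = range ((*) x)"
  define c where "c j = (SOME r. j = x * r)" for j
  have J: "ideal J"
    unfolding ideal_iff J_def
  proof (intro conjI ballI allI)
    show "0 \<in> range ((*) x)" by (rule range_eqI[of _ _ 0]) simp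
  next
    fix u v assume "u \<in> range ((*) x)" "v \<in> range ((*) x)"
    then obtain r s where "u = x * r" "v = x * s" by blast
    then have "u + v = x * (r + s)" by (simp add: distrib_left)
    then show "u + v \<in> range ((*) x)" by (rule range_eqI)
  next
    fix d u assume "u \<in> range ((*) x)"
    then obtain r where "u = x * r" by blast
    then have "d * u = x * (d * r)" by (simp add: mult.left_commute)
    then show "d * u \<in> range ((*) x)" by (rule range_eqI)
  qed
  have x_c: "x * c j = j" if "j \<in> J" for j
    using that unfolding J_def c_def by (metis (mono_tags, lifting) rangeE someI)
  have x: "x \<in> J" unfolding J_def by (rule range_eqI[of _ _ 1]) simp
  moreover have "tensor_eval scale (delta (x, m)) = x *s m"
    by (simp add: tensor_eval_def delta_def)
  ultimately have "delta (x, m) \<in> tensor_rel J scale K"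
    using assms J unfolding flat_quot_def by auto
  then have "c x *s m \<in> span (K \<union> {a *s v | a v. x * a = 0})"
    using tensor_eval_with_mem_span[OF J x_c] by fastforce
  moreover have "(c x - 1) *s m \<in> span (K \<union> {a *s v | a v. x * a = 0})"
    using x_c[OF x] by (intro span_base UnI2) (auto simp: right_diff_distrib)
  ultimately have "c x *s m - (c x - 1) *s m \<in> span (K \<union> {a *s v | a v. x * a = 0})"
    by (rule span_diff)
  then show ?thesis by (simp add: scale_left_diff_distrib)
qed

lemma annihilator_ideal: "ideal (annihilator scale)"
  unfolding ideal_iff annihilator_def
proof (intro conjI ballI allI; clarsimp)
  show "(a + b) *s m = 0" if "\<forall>m. a *s m = 0" "\<forall>m. b *s m = 0" for a b m
    using that by (simp add: scale_left_distrib)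
  show "(c * a) *s m = 0" if "\<forall>m. a *s m = 0" for c a m
    using that by (metis scale_scale scale_zero_right)
qed

lemma ex_annihilator_mult_eq_self:
  assumes "finitely_generated scale" and "flat_module scale" and "x \<in> annihilator scale"
  shows "\<exists>y\<in>annihilator scale. x * y = x"
proof -
  define A where "A = {a. x * a = 0}"
  have A: "ideal A"
    unfolding ideal_iff A_def by (simp add: distrib_left mult.left_commute)
  have "m \<in> span {a *s v | a v. a \<in> A}" for m
  proof -
    have "flat_quot scale {0}" using assms(2) unfolding flat_module_def by simp
    moreover have "x *s m \<in> {0}" using assms(3) unfolding annihilator_def by simp
    ultimately have "m \<in> span ({0} \<union> {a *s v | a v. x * a = 0})"
      by (rule flat_quot_mem_span_annihilator)
    then show ?thesis unfolding A_def by (simp add: span_breakdown_eq)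
  qed
  then have "span {a *s v | a v. a \<in> A} = UNIV" by auto
  moreover obtain T where "finite T" "span T = UNIV"
    using assms(1) unfolding finitely_generated_def by blast
  ultimately obtain a where "a \<in> A" "\<forall>m. (1 - a) *s m = 0"
    using nakayama A by blast
  then show ?thesis
    unfolding annihilator_def A_def by (intro bexI[of _ "1 - a"]) (simp_all add: right_diff_distrib)
qed

end

theorem corollary2p3:
  fixes scale :: "'a::comm_ring_1 \<Rightarrow> 'm::ab_group_add \<Rightarrow> 'm"
  assumes "module scale"
    and "finitely_generated scale"
    and "flat_module scale"
  shows "pure_ideal (annihilator scale)"
proof (rule pure_idealI)
  interpret module scale by fact
  show "ideal (annihilator scale)" by (rule annihilator_ideal)
  show "\<exists>y\<in>annihilator scale. z * y = z" if "z \<in> annihilator scale" for z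
    using assms(2,3) that by (rule ex_annihilator_mult_eq_self)
qed

end
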